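(* Let $m,n\in\mathbf{N}$ with $m\ge n$, and let $\mathcal{P}$ be a closed set family of shape $(m^n)$. Then every $X\in\mathcal{P}$ satisfies $X\supseteq\{1,2,\dots,m-n+1\}$.
   Context: Majorization: for $m$-subsets $X=\{x_1<\dots<x_m\}$, $Y=\{y_1<\dots<y_m\}$ of $\mathbf{N}=\{1,2,\dots\}$, $X\preceq Y$ if $x_i\le y_i$ for all $i$. A set family of shape $(m^n)$ is a collection of $n$ distinct $m$-subsets of $\mathbf{N}$; it is closed if whenever $Y$ belongs to it and $X\preceq Y$, then $X$ belongs to it. *)

theory Defs
  imports Main
begin

definition msubset :: "nat \<Rightarrow> nat set \<Rightarrow> bool" where
  "msubset m X \<longleftrightarrow> finite X \<and> card X = m \<and> 0 \<notin> X"

definition majorized :: "nat set \<Rightarrow> nat set \<Rightarrow> bool" where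
  "majorized X Y \<longleftrightarrow> finite X \<and> finite Y \<and> card X = card Y \<and>
     (\<forall>i < card X. sorted_list_of_set X ! i \<le> sorted_list_of_set Y ! i)"

definition set_family :: "nat \<Rightarrow> nat \<Rightarrow> nat set set \<Rightarrow> bool" where
  "set_family m n P \<longleftrightarrow> finite P \<and> card P = n \<and> (\<forall>X\<in>P. msubset m X)"

definition closed_family :: "nat \<Rightarrow> nat \<Rightarrow> nat set set \<Rightarrow> bool" where
  "closed_family m n P \<longleftrightarrow> set_family m n P \<and>
     (\<forall>X Y. Y \<in> P \<longrightarrow> msubset m X \<longrightarrow> majorized X Y \<longrightarrow> X \<in> P)"

end

theory Submission
  imports Defs
begin

text \<open>If some \<open>k \<le> m - n + 1\<close> is missing from a member \<open>X\<close> of the family, then each of the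
  \<open>m + 2 - k \<ge> n + 1\<close> sets \<open>{1..m+1} - {j}\<close> with \<open>k \<le> j \<le> m + 1\<close> is majorized by \<open>X\<close>:
  their \<open>i\<close>-th element is \<open>i + 1\<close> below position \<open>j - 1\<close> and \<open>i + 2\<close> from there on, while
  the \<open>i\<close>-th element of \<open>X\<close> is at least \<open>i + 1\<close>, and at least \<open>i + 2\<close> once \<open>i \<ge> k - 1\<close>
  because \<open>k\<close> was skipped. Closedness puts all of them into a family with only \<open>n\<close> members.\<close>

lemma sorted_list_of_set_atLeastAtMost_remove:
  assumes "1 \<le> j" "j \<le> Suc m"
  shows "sorted_list_of_set ({1..Suc m} - {j}) = [1..<j] @ [Suc j..<m+2]"
proof -
  let ?xs = "[1..<j] @ [Suc j..<m+2]"
  have "{1..Suc m} - {j} = set ?xs"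
    using assms by (auto simp: set_eq_iff)
  moreover have "sorted ?xs" "distinct ?xs"
    by (auto simp: sorted_append)
  ultimately show ?thesis
    by (metis sorted_list_of_set.idem_if_sorted_distinct)
qed

lemma nth_sorted_list_of_set_atLeastAtMost_remove:
  assumes "1 \<le> j" "j \<le> Suc m" "i < m"
  shows "sorted_list_of_set ({1..Suc m} - {j}) ! i = (if i < j - 1 then i + 1 else i + 2)"
  unfolding sorted_list_of_set_atLeastAtMost_remove[OF assms(1,2)]
  using assms by (auto simp: nth_append)

lemma strict_sorted_nth_ge:
  fixes xs :: "nat list"
  assumes "sorted_wrt (<) xs" "0 \<notin> set xs" "i < length xs"
  shows "i + 1 \<le> xs ! i"
  using assms(3)
proof (induction i)
  case 0
  then show ?case using assms(2) by (cases xs) auto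
next
  case (Suc i)
  then have "xs ! i < xs ! Suc i" using sorted_wrt_nth_less[OF assms(1)] by simp
  with Suc show ?case by simp
qed

lemma strict_sorted_nth_ge_skip:
  fixes xs :: "nat list"
  assumes "sorted_wrt (<) xs" "0 \<notin> set xs" "k \<notin> set xs" "1 \<le> k" "k \<le> Suc i" "i < length xs"
  shows "i + 2 \<le> xs ! i"
  using assms(5,6)
proof (induction i)
  case 0
  have "xs ! 0 \<noteq> k" using 0 assms(3) nth_mem by metis
  moreover have "1 \<le> xs ! 0" using strict_sorted_nth_ge[OF assms(1,2) 0(2)] by simp
  ultimately show ?case using 0(1) assms(4) by linarith
next
  case (Suc i)
  show ?case
  proof (cases "k \<le> Suc i")
    case True
    then have "i + 2 \<le> xs ! i" using Suc.IH Suc.prems(2) by simp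
    moreover have "xs ! i < xs ! Suc i" using Suc.prems(2) sorted_wrt_nth_less[OF assms(1)] by simp
    ultimately show ?thesis by simp
  next
    case False
    then have "k = Suc i + 1" using Suc.prems(1) by simp
    moreover have "xs ! Suc i \<in> set xs" using Suc.prems(2) by (rule nth_mem)
    ultimately have "xs ! Suc i \<noteq> Suc i + 1" using assms(3) by auto
    moreover have "Suc i + 1 \<le> xs ! Suc i" using strict_sorted_nth_ge[OF assms(1,2) Suc.prems(2)] .
    ultimately show ?thesis by simp
  qed
qed

lemma msubset_atLeastAtMost_remove:
  assumes "1 \<le> j" "j \<le> Suc m"
  shows "msubset m ({1..Suc m} - {j})"
  using assms by (simp add: msubset_def)

lemma inj_on_atLeastAtMost_remove: "inj_on (\<lambda>j. {1..Suc m} - {j}) {1..Suc m}"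
  by (rule inj_onI) blast

lemma majorized_atLeastAtMost_remove:
  assumes X: "msubset m X" and k: "k \<notin> X" "1 \<le> k" "k \<le> j" and j: "j \<le> Suc m"
  shows "majorized ({1..Suc m} - {j}) X"
  unfolding majorized_def
proof (intro conjI allI impI)
  let ?xs = "sorted_list_of_set X"
  have fin: "finite X" and card: "card X = m" and pos: "0 \<notin> set ?xs"
    using X by (auto simp: msubset_def)
  show "finite ({1..Suc m} - {j})" "finite X" by (simp_all add: fin)
  show "card ({1..Suc m} - {j}) = card X"
    using msubset_atLeastAtMost_remove[of j m] k j card by (simp add: msubset_def)
  fix i assume "i < card ({1..Suc m} - {j})"
  then have i: "i < length ?xs" "i < m" using k j card by auto
  have "k \<notin> set ?xs" using k fin by simp
  then have "?xs ! i \<ge> (if i < j - 1 then i + 1 else i + 2)"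
    using strict_sorted_nth_ge[OF _ pos i(1)] strict_sorted_nth_ge_skip[OF _ pos _ k(2) _ i(1)] k
    by auto
  then show "sorted_list_of_set ({1..Suc m} - {j}) ! i \<le> ?xs ! i"
    using nth_sorted_list_of_set_atLeastAtMost_remove[OF _ j i(2)] k by simp
qed

theorem lemma5p4:
  fixes m n :: nat and P :: "nat set set"
  assumes "1 \<le> n" and "n \<le> m"
    and "closed_family m n P"
  shows "\<forall>X\<in>P. {1..m - n + 1} \<subseteq> X"
proof (intro ballI subsetI, rule ccontr)
  fix X k assume XP: "X \<in> P" and k: "k \<in> {1..m - n + 1}" "k \<notin> X"
  from assms(3) have "finite P" "card P = n" "msubset m X"
    and closed: "\<And>X Y. Y \<in> P \<Longrightarrow> msubset m X \<Longrightarrow> majorized X Y \<Longrightarrow> X \<in> P"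
    using XP unfolding closed_family_def set_family_def by blast+
  let ?Y = "\<lambda>j. {1..Suc m} - {j}"
  have "?Y ` {k..Suc m} \<subseteq> P"
    using k closed[OF XP msubset_atLeastAtMost_remove majorized_atLeastAtMost_remove] \<open>msubset m X\<close>
    by auto
  then have "card (?Y ` {k..Suc m}) \<le> n"
    using card_mono \<open>finite P\<close> \<open>card P = n\<close> by metis
  moreover have "inj_on ?Y {k..Suc m}"
    using k by (intro inj_on_subset[OF inj_on_atLeastAtMost_remove]) auto
  then have "card (?Y ` {k..Suc m}) = Suc m + 1 - k"
    by (simp add: card_image)
  ultimately show False using k assms(1,2) by auto
qed

end
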